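(* Let $p\in(1,2]$ and let ${\bm{W}}_1,\dots,{\bm{W}}_T\in\mathbb{R}^{m\times n}$ ($T\ge1$) be random matrices with $\mathbb E\|{\bm{W}}_t\|_F^p<\infty$ forming a martingale difference sequence with respect to the natural filtration $\mathcal F_t=\sigma({\bm{W}}_1,\dots,{\bm{W}}_t)$ ($\mathcal F_0$ trivial), i.e. $\mathbb E[{\bm{W}}_t\mid\mathcal F_{t-1}]=\mathbf 0$. Then $$\mathbb E\Big\|\sum_{t=1}^T{\bm{W}}_t\Big\|_F\le 2\sqrt\pi\;\mathbb E\Big[\Big(\sum_{t=1}^T\|{\bm{W}}_t\|_F^p\Big)^{1/p}\Big].$$
   Context: $\|\cdot\|_F$ is the Frobenius norm. *)

theory Defs
  imports "HOL-Analysis.Analysis" "HOL-Probability.Probability"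
begin

text \<open>Frobenius norm of an m x n real matrix (rows indexed by 'm, columns by 'n).\<close>
definition frob_norm :: "real ^ 'n ^ 'm \<Rightarrow> real" where
  "frob_norm A = sqrt (\<Sum>i\<in>UNIV. \<Sum>j\<in>UNIV. (A $ i $ j)\<^sup>2)"

text \<open>Natural filtration: the sigma-algebra generated by W 1, ..., W k on the
  sample space of M (for k = 0 it is the trivial sigma-algebra).\<close>
definition nat_filtration ::
  "'a measure \<Rightarrow> (nat \<Rightarrow> 'a \<Rightarrow> 'b::topological_space) \<Rightarrow> nat \<Rightarrow> 'a measure" where
  "nat_filtration M W k =
     sigma (space M) (\<Union>s\<in>{1..k}. {W s -` A \<inter> space M | A. A \<in> sets borel})"

end

theory Submission
  imports Defs
begin

text \<open>Let S_t be the partial sums and Y_t = (\<Sum>s\<le>t. |W_s|^2)^(1/2) the square function.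
  With c = 69/20 the potential Phi(x, y) = sqrt (y^2 + |x|^2) - c y satisfies
  Phi(x + d, sqrt (y^2 + |d|^2)) \<le> Phi(x, y) + <G(x, y), d>, where G(x, y) = x / sqrt (y^2 + |x|^2)
  is its gradient in x. Summing, |S_T| - c Y_T \<le> Phi(S_T, Y_T) is bounded by the martingale
  transform \<Sum>t. <G(S_(t-1), Y_(t-1)), W_t>, whose coefficients are bounded and
  F_(t-1)-measurable, so it has mean zero and E|S_T| \<le> c E Y_T. Finally Y_T, an l^2 norm,
  is at most the l^p norm of (|W_t|)_t for p \<le> 2, and 69/20 \<le> 2 sqrt pi.\<close>

lemma sqrt_le_tangent:
  fixes r h :: real
  assumes "0 < r" and "0 \<le> r\<^sup>2 + 2 * h"
  shows "sqrt (r\<^sup>2 + 2 * h) \<le> r + h / r"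
proof -
  have "0 \<le> (sqrt (r\<^sup>2 + 2 * h) - r)\<^sup>2" by simp
  then have "r * sqrt (r\<^sup>2 + 2 * h) \<le> r\<^sup>2 + h"
    using assms by (simp add: power2_diff algebra_simps)
  then show ?thesis
    using assms by (simp add: field_simps power2_eq_square)
qed

text \<open>In the next two lemmas R, s, b and d stand for sqrt (y^2 + |x|^2), sqrt (y^2 + |d|^2),
  <x, d> and |d| in potential_step_nondegenerate. The threshold s = 49/20 y between them is
  where the first bound reaches exactly 69/20; the second then gives 46/25 + 8/5 < 69/20.\<close>

lemma potential_step_small_increment:
  fixes R y s b d c :: real
  assumes "0 < R" and "y \<le> R" and "y \<le> s" and "20 * s \<le> 49 * y" and d_sq: "d\<^sup>2 = s\<^sup>2 - y\<^sup>2"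
    and "0 \<le> R\<^sup>2 + 2 * (b + d\<^sup>2)" and "69/20 \<le> c"
  shows "sqrt (R\<^sup>2 + 2 * (b + d\<^sup>2)) \<le> R + b / R + c * (s - y)"
proof -
  have "d\<^sup>2 = (s - y) * (s + y)" using d_sq by (simp add: power2_eq_square algebra_simps)
  also have "\<dots> \<le> (s - y) * (c * R)"
  proof (rule mult_left_mono)
    have "69/20 * R \<le> c * R" using assms by (intro mult_right_mono) auto
    then show "s + y \<le> c * R" using assms by linarith
  qed (use assms in simp)
  finally have "d\<^sup>2 / R \<le> c * (s - y)"
    using \<open>0 < R\<close> by (subst pos_divide_le_eq) (simp_all add: algebra_simps)
  moreover have "sqrt (R\<^sup>2 + 2 * (b + d\<^sup>2)) \<le> R + (b + d\<^sup>2) / R"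
    using assms by (intro sqrt_le_tangent)
  ultimately show ?thesis
    unfolding add_divide_distrib by linarith
qed

lemma potential_step_large_increment:
  fixes y s d c :: real
  assumes "0 \<le> y" and "49 * y \<le> 20 * s" and "0 \<le> d" and d_sq: "d\<^sup>2 = s\<^sup>2 - y\<^sup>2"
    and "69/20 \<le> c"
  shows "sqrt (d\<^sup>2 + (s - y)\<^sup>2) + d \<le> c * (s - y)"
proof -
  define e where "e = s - y"
  have "0 \<le> e" using assms by (simp add: e_def)
  have "d\<^sup>2 + e\<^sup>2 = 2 * s * e"
    using d_sq by (simp add: e_def power2_eq_square algebra_simps)
  also have "\<dots> \<le> (2116/625 * e) * e"
    using assms \<open>0 \<le> e\<close> by (intro mult_right_mono) (simp_all add: e_def)
  also have "\<dots> = (46/25 * e)\<^sup>2" by (simp add: power2_eq_square)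
  finally have "sqrt (d\<^sup>2 + e\<^sup>2) \<le> 46/25 * e"
    using \<open>0 \<le> e\<close> by (intro real_le_lsqrt) simp_all
  moreover have "d \<le> 8/5 * e"
  proof (rule power2_le_imp_le)
    have "d\<^sup>2 = e * (s + y)" using d_sq by (simp add: e_def power2_eq_square algebra_simps)
    also have "\<dots> \<le> e * (64/25 * e)"
      using assms \<open>0 \<le> e\<close> by (intro mult_left_mono) (simp_all add: e_def)
    finally show "d\<^sup>2 \<le> (8/5 * e)\<^sup>2" by (simp add: power2_eq_square)
  qed (use \<open>0 \<le> e\<close> in simp)
  moreover have "69/20 * e \<le> c * e"
    using assms \<open>0 \<le> e\<close> by (intro mult_right_mono)
  ultimately show ?thesis
    unfolding e_def[symmetric] using \<open>0 \<le> e\<close> by linarith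
qed

definition potential :: "real \<Rightarrow> 'v::real_normed_vector \<Rightarrow> real \<Rightarrow> real" where
  "potential c x y = sqrt (y\<^sup>2 + (norm x)\<^sup>2) - c * y"

text \<open>The gradient of potential c in x; at x = 0, y = 0 division by zero makes it 0.\<close>

definition potential_grad :: "'v::real_normed_vector \<Rightarrow> real \<Rightarrow> 'v" where
  "potential_grad x y = x /\<^sub>R sqrt (y\<^sup>2 + (norm x)\<^sup>2)"

lemma norm_potential_grad_le: "norm (potential_grad x y) \<le> 1"
proof -
  have "norm (potential_grad x y) = norm x / sqrt (y\<^sup>2 + (norm x)\<^sup>2)"
    by (simp add: potential_grad_def divide_inverse_commute)
  moreover have "norm x \<le> sqrt (y\<^sup>2 + (norm x)\<^sup>2)" by (rule real_le_rsqrt) simp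
  ultimately show ?thesis
    by (cases "x = 0") (simp_all add: divide_le_eq_1 sum_power2_gt_zero_iff)
qed

lemma sqrt_sq_norm_add_le:
  fixes x d :: "'v::real_normed_vector" and y s :: real
  shows "sqrt (s\<^sup>2 + (norm (x + d))\<^sup>2) \<le> sqrt (y\<^sup>2 + (norm x)\<^sup>2) + sqrt ((norm d)\<^sup>2 + (s - y)\<^sup>2)"
proof -
  have "sqrt (s\<^sup>2 + (norm (x + d))\<^sup>2) = norm ((x, y) + (d, s - y))"
    by (simp add: norm_Pair add.commute)
  also have "\<dots> \<le> norm (x, y) + norm (d, s - y)"
    by (rule norm_triangle_ineq)
  also have "\<dots> = sqrt (y\<^sup>2 + (norm x)\<^sup>2) + sqrt ((norm d)\<^sup>2 + (s - y)\<^sup>2)"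
    by (simp add: norm_Pair add.commute)
  finally show ?thesis .
qed

lemma potential_step_nondegenerate:
  fixes x d :: "'v::real_inner"
  assumes "0 \<le> y" and "x \<noteq> 0 \<or> y \<noteq> 0" and "69/20 \<le> c"
  shows "potential c (x + d) (sqrt (y\<^sup>2 + (norm d)\<^sup>2))
           \<le> potential c x y + inner (potential_grad x y) d"
proof -
  define R where "R = sqrt (y\<^sup>2 + (norm x)\<^sup>2)"
  define s where "s = sqrt (y\<^sup>2 + (norm d)\<^sup>2)"
  define b where "b = inner x d"
  have "0 < R" using assms by (auto simp: R_def sum_power2_gt_zero_iff)
  have "y \<le> R" "y \<le> s" by (simp_all add: R_def s_def real_le_rsqrt)
  have s_sq: "s\<^sup>2 = y\<^sup>2 + (norm d)\<^sup>2" by (simp add: s_def)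
  have "sqrt (s\<^sup>2 + (norm (x + d))\<^sup>2) \<le> R + b / R + c * (s - y)"
  proof (cases "20 * s \<le> 49 * y")
    case True
    have square: "s\<^sup>2 + (norm (x + d))\<^sup>2 = R\<^sup>2 + 2 * (b + (norm d)\<^sup>2)"
      by (simp add: s_sq R_def b_def power2_norm_eq_inner inner_add inner_commute)
    have "0 \<le> R\<^sup>2 + 2 * (b + (norm d)\<^sup>2)"
      unfolding square[symmetric] by simp
    then show ?thesis
      unfolding square using \<open>0 < R\<close> \<open>y \<le> R\<close> \<open>y \<le> s\<close> True s_sq assms(3)
      by (intro potential_step_small_increment) auto
  next
    case False
    have "norm x * norm d \<le> R * norm d"
      by (intro mult_right_mono) (simp_all add: R_def real_le_rsqrt)
    then have "- b \<le> R * norm d"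
      using Cauchy_Schwarz_ineq2[of x d] by (simp add: b_def abs_le_iff)
    then have "- (b / R) \<le> norm d"
      using \<open>0 < R\<close> by (metis minus_divide_left mult.commute pos_divide_le_eq)
    moreover have "sqrt ((norm d)\<^sup>2 + (s - y)\<^sup>2) + norm d \<le> c * (s - y)"
      using False assms s_sq by (intro potential_step_large_increment) auto
    ultimately show ?thesis
      using sqrt_sq_norm_add_le[of s x d y, folded R_def] by linarith
  qed
  moreover have "inner (potential_grad x y) d = b / R"
    by (simp add: potential_grad_def R_def b_def field_simps)
  ultimately show ?thesis
    by (simp add: potential_def abs_of_nonneg R_def s_def power2_eq_square algebra_simps)
qed

lemma potential_step:
  fixes x d :: "'v::real_inner"
  assumes "0 \<le> y" and "69/20 \<le> c"
  shows "potential c (x + d) (sqrt (y\<^sup>2 + (norm d)\<^sup>2))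
           \<le> potential c x y + inner (potential_grad x y) d"
proof (cases "x = 0 \<and> y = 0")
  case True
  have "sqrt 2 \<le> 2" by (rule real_le_lsqrt) simp_all
  then have "sqrt 2 * norm d \<le> c * norm d" using assms by (intro mult_right_mono) auto
  then show ?thesis
    using True by (simp add: potential_def potential_grad_def real_sqrt_mult flip: mult_2)
next
  case False
  then show ?thesis using assms by (intro potential_step_nondegenerate) auto
qed

lemma norm_sum_le_square_function_add_transform:
  fixes w :: "nat \<Rightarrow> 'v::real_inner"
  assumes "69/20 \<le> c"
  shows "norm (\<Sum>t=1..n. w t) \<le> c * L2_set (\<lambda>t. norm (w t)) {1..n}
           + (\<Sum>t=1..n. inner (potential_grad (\<Sum>s=1..t-1. w s) (L2_set (\<lambda>s. norm (w s)) {1..t-1})) (w t))"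
proof -
  define S where "S k = (\<Sum>t=1..k. w t)" for k
  define Y where "Y k = L2_set (\<lambda>t. norm (w t)) {1..k}" for k
  have S_Suc: "S (Suc k) = S k + w (Suc k)" for k
    by (simp add: S_def)
  have Y_Suc: "Y (Suc k) = sqrt ((Y k)\<^sup>2 + (norm (w (Suc k)))\<^sup>2)" for k
    by (simp add: Y_def L2_set_def sum_nonneg)
  have transform: "potential c (S k) (Y k) \<le> (\<Sum>t=1..k. inner (potential_grad (S (t-1)) (Y (t-1))) (w t))" for k
  proof (induction k)
    case 0
    show ?case by (simp add: potential_def S_def Y_def)
  next
    case (Suc k)
    have "potential c (S (Suc k)) (Y (Suc k))
            \<le> potential c (S k) (Y k) + inner (potential_grad (S k) (Y k)) (w (Suc k))"
      unfolding S_Suc Y_Suc by (rule potential_step[OF _ assms]) (simp add: Y_def)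
    then show ?case using Suc.IH by simp
  qed
  have "norm (S n) \<le> potential c (S n) (Y n) + c * Y n"
    by (simp add: potential_def real_le_rsqrt)
  then show ?thesis
    using transform[of n] unfolding S_def Y_def by linarith
qed

lemma space_nat_filtration: "space (nat_filtration M W k) = space M"
  by (simp add: nat_filtration_def space_measure_of_conv)

lemma sets_nat_filtration:
  "sets (nat_filtration M W k)
     = sigma_sets (space M) (\<Union>s\<in>{1..k}. {W s -` A \<inter> space M | A. A \<in> sets borel})"
  unfolding nat_filtration_def by (rule sets_measure_of) auto

lemma measurable_nat_filtration:
  "s \<in> {1..k} \<Longrightarrow> W s \<in> borel_measurable (nat_filtration M W k)"
proof (rule measurableI)
  fix A :: "'b set"
  assume "s \<in> {1..k}" and "A \<in> sets borel"
  then show "W s -` A \<inter> space (nat_filtration M W k) \<in> sets (nat_filtration M W k)"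
    unfolding space_nat_filtration sets_nat_filtration by (intro sigma_sets.Basic) blast
qed simp

lemma sigma_finite_subalgebra_nat_filtration:
  assumes "finite_measure M" and "\<And>s. s \<in> {1..k} \<Longrightarrow> W s \<in> borel_measurable M"
  shows "sigma_finite_subalgebra M (nat_filtration M W k)"
proof (rule finite_measure_subalgebra_is_sigma_finite)
  have "subalgebra M (nat_filtration M W k)"
    unfolding subalgebra_def space_nat_filtration sets_nat_filtration
    using assms(2) by (auto intro!: sets.sigma_sets_subset measurable_sets)
  then show "finite_measure_subalgebra M (nat_filtration M W k)"
    using assms(1) by (simp add: finite_measure_subalgebra_def finite_measure_subalgebra_axioms_def)
qed

lemma borel_measurable_vec_nth [measurable]:
  "(\<lambda>x::'b::real_normed_vector^'n. x $ i) \<in> borel_measurable borel"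
  by (intro borel_measurable_continuous_onI linear_continuous_on bounded_linear_vec_nth)

lemma integral_inner_eq_0_if_cond_exp_eq_0:
  fixes W g :: "'a \<Rightarrow> real^'n^'m"
  assumes "sigma_finite_subalgebra M F" and "integrable M W"
    and [measurable]: "g \<in> borel_measurable F" and g_bound: "\<And>\<omega>. norm (g \<omega>) \<le> B"
    and cond_exp: "\<And>i j. AE \<omega> in M. real_cond_exp M F (\<lambda>\<omega>. W \<omega> $ i $ j) \<omega> = 0"
  shows "integrable M (\<lambda>\<omega>. inner (g \<omega>) (W \<omega>))" and "(\<integral>\<omega>. inner (g \<omega>) (W \<omega>) \<partial>M) = 0"
proof -
  interpret sigma_finite_subalgebra M F by fact
  have [measurable]: "W \<in> borel_measurable M" "g \<in> borel_measurable M"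
    using \<open>integrable M W\<close> measurable_from_subalg[OF subalg assms(3)] by auto
  have "0 \<le> B" using g_bound norm_ge_zero order_trans by blast
  have integrable_ij: "integrable M (\<lambda>\<omega>. g \<omega> $ i $ j * W \<omega> $ i $ j)" for i j
  proof (rule Bochner_Integration.integrable_bound)
    show "integrable M (\<lambda>\<omega>. B * norm (W \<omega>))"
      using \<open>integrable M W\<close> by auto
    have "\<bar>g \<omega> $ i $ j\<bar> * \<bar>W \<omega> $ i $ j\<bar> \<le> B * norm (W \<omega>)" for \<omega>
      using g_bound[of \<omega>]
        Finite_Cartesian_Product.norm_nth_le[of "g \<omega>" i] component_le_norm_cart[of "g \<omega> $ i" j]
        Finite_Cartesian_Product.norm_nth_le[of "W \<omega>" i] component_le_norm_cart[of "W \<omega> $ i" j]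
      by (intro mult_mono) auto
    then show "AE \<omega> in M. norm (g \<omega> $ i $ j * W \<omega> $ i $ j) \<le> norm (B * norm (W \<omega>))"
      using \<open>0 \<le> B\<close> by (auto simp: abs_mult)
  qed measurable
  have "(\<integral>\<omega>. g \<omega> $ i $ j * W \<omega> $ i $ j \<partial>M) = 0" for i j
  proof -
    have "(\<integral>\<omega>. g \<omega> $ i $ j * W \<omega> $ i $ j \<partial>M)
            = (\<integral>\<omega>. g \<omega> $ i $ j * real_cond_exp M F (\<lambda>\<omega>. W \<omega> $ i $ j) \<omega> \<partial>M)"
      by (rule real_cond_exp_intg(2)[symmetric]) (use integrable_ij in auto)
    also have "\<dots> = 0"
      by (rule integral_eq_zero_AE) (use cond_exp[of i j] in auto)
    finally show ?thesis .
  qed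
  moreover have "inner (g \<omega>) (W \<omega>) = (\<Sum>i\<in>UNIV. \<Sum>j\<in>UNIV. g \<omega> $ i $ j * W \<omega> $ i $ j)" for \<omega>
    by (simp add: inner_vec_def)
  ultimately show "integrable M (\<lambda>\<omega>. inner (g \<omega>) (W \<omega>))" "(\<integral>\<omega>. inner (g \<omega>) (W \<omega>) \<partial>M) = 0"
    using integrable_ij by simp_all
qed

lemma borel_measurable_potential_grad_nat_filtration:
  fixes W :: "nat \<Rightarrow> 'a \<Rightarrow> 'b::euclidean_space"
  shows "(\<lambda>\<omega>. potential_grad (\<Sum>s=1..k. W s \<omega>) (L2_set (\<lambda>s. norm (W s \<omega>)) {1..k}))
           \<in> borel_measurable (nat_filtration M W k)"
proof -
  have [measurable]: "\<And>s. s \<in> {1..k} \<Longrightarrow> W s \<in> borel_measurable (nat_filtration M W k)"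
    by (rule measurable_nat_filtration)
  show ?thesis
    unfolding potential_grad_def L2_set_def by measurable
qed

lemma integrable_L2_set_norm:
  fixes f :: "'i \<Rightarrow> 'a \<Rightarrow> 'b::{banach, second_countable_topology}"
  assumes "finite A" and integrable: "\<And>i. i \<in> A \<Longrightarrow> integrable M (f i)"
  shows "integrable M (\<lambda>\<omega>. L2_set (\<lambda>i. norm (f i \<omega>)) A)"
proof (rule Bochner_Integration.integrable_bound)
  show "integrable M (\<lambda>\<omega>. \<Sum>i\<in>A. norm (f i \<omega>))"
    using integrable by auto
  have [measurable]: "\<And>i. i \<in> A \<Longrightarrow> f i \<in> borel_measurable M"
    using integrable by auto
  show "(\<lambda>\<omega>. L2_set (\<lambda>i. norm (f i \<omega>)) A) \<in> borel_measurable M"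
    unfolding L2_set_def by measurable
qed (auto intro!: AE_I2 L2_set_le_sum simp: sum_nonneg)

lemma integral_norm_sum_le_square_function:
  fixes W :: "nat \<Rightarrow> 'a \<Rightarrow> real^'n^'m"
  assumes "prob_space M" and "69/20 \<le> c"
    and integrable: "\<And>t. t \<in> {1..T} \<Longrightarrow> integrable M (W t)"
    and mds: "\<And>t i j. t \<in> {1..T} \<Longrightarrow>
       AE \<omega> in M. real_cond_exp M (nat_filtration M W (t - 1)) (\<lambda>x. W t x $ i $ j) \<omega> = 0"
  shows "(\<integral>\<omega>. norm (\<Sum>t=1..T. W t \<omega>) \<partial>M) \<le> c * (\<integral>\<omega>. L2_set (\<lambda>t. norm (W t \<omega>)) {1..T} \<partial>M)"
proof -
  interpret prob_space M by fact
  define I where "I t \<omega> = inner (potential_grad (\<Sum>s=1..t-1. W s \<omega>)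
                   (L2_set (\<lambda>s. norm (W s \<omega>)) {1..t-1})) (W t \<omega>)" for t \<omega>
  have I: "integrable M (I t)" "(\<integral>\<omega>. I t \<omega> \<partial>M) = 0" if "t \<in> {1..T}" for t
  proof -
    have "sigma_finite_subalgebra M (nat_filtration M W (t-1))"
      using that by (intro sigma_finite_subalgebra_nat_filtration finite_measure_axioms
          borel_measurable_integrable integrable) auto
    note transform = integral_inner_eq_0_if_cond_exp_eq_0[OF this integrable[OF that]
        borel_measurable_potential_grad_nat_filtration norm_potential_grad_le mds[OF that]]
    show "integrable M (I t)" unfolding I_def by (fact transform(1))
    show "(\<integral>\<omega>. I t \<omega> \<partial>M) = 0" unfolding I_def by (fact transform(2))
  qed
  have integrable_L2: "integrable M (\<lambda>\<omega>. L2_set (\<lambda>t. norm (W t \<omega>)) {1..T})"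
    using integrable by (intro integrable_L2_set_norm) auto
  have integrable_norm: "integrable M (\<lambda>\<omega>. norm (\<Sum>t=1..T. W t \<omega>))"
    using integrable by (intro integrable_norm Bochner_Integration.integrable_sum) auto
  have "(\<integral>\<omega>. norm (\<Sum>t=1..T. W t \<omega>) \<partial>M)
          \<le> (\<integral>\<omega>. c * L2_set (\<lambda>t. norm (W t \<omega>)) {1..T} + (\<Sum>t=1..T. I t \<omega>) \<partial>M)"
  proof (rule integral_mono[OF integrable_norm])
    show "integrable M (\<lambda>\<omega>. c * L2_set (\<lambda>t. norm (W t \<omega>)) {1..T} + (\<Sum>t=1..T. I t \<omega>))"
      using integrable_L2 I(1) by (intro Bochner_Integration.integrable_add
          Bochner_Integration.integrable_mult_right Bochner_Integration.integrable_sum) auto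
    show "norm (\<Sum>t=1..T. W t \<omega>) \<le> c * L2_set (\<lambda>t. norm (W t \<omega>)) {1..T} + (\<Sum>t=1..T. I t \<omega>)"
      for \<omega>
      unfolding I_def by (rule norm_sum_le_square_function_add_transform[OF assms(2)])
  qed
  also have "\<dots> = (\<integral>\<omega>. c * L2_set (\<lambda>t. norm (W t \<omega>)) {1..T} \<partial>M) + (\<integral>\<omega>. (\<Sum>t=1..T. I t \<omega>) \<partial>M)"
    using integrable_L2 I(1) by (intro Bochner_Integration.integral_add) auto
  also have "\<dots> = c * (\<integral>\<omega>. L2_set (\<lambda>t. norm (W t \<omega>)) {1..T} \<partial>M)"
    using I by (simp add: Bochner_Integration.integral_sum)
  finally show ?thesis .
qed

lemma sum_powr_root_antimono:
  fixes a :: "'i \<Rightarrow> real"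
  assumes "finite A" and nonneg: "\<And>i. i \<in> A \<Longrightarrow> 0 \<le> a i" and "0 < p" and "p \<le> q"
  shows "(\<Sum>i\<in>A. a i powr q) powr (1/q) \<le> (\<Sum>i\<in>A. a i powr p) powr (1/p)"
proof -
  define N where "N = (\<Sum>i\<in>A. a i powr p) powr (1/p)"
  have "0 < q" using assms by simp
  have N_powr: "N powr p = (\<Sum>i\<in>A. a i powr p)"
    unfolding N_def using \<open>0 < p\<close> by (simp add: powr_powr sum_nonneg)
  have a_le_N: "a i \<le> N" if "i \<in> A" for i
  proof -
    have "a i powr p \<le> N powr p"
      unfolding N_powr using \<open>finite A\<close> that by (intro member_le_sum) auto
    moreover have "0 \<le> N" by (simp add: N_def)
    ultimately show ?thesis
      using \<open>0 < p\<close> by (meson not_le powr_less_mono2)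
  qed
  show ?thesis
  proof (cases "N = 0")
    case True
    then have "\<And>i. i \<in> A \<Longrightarrow> a i = 0" using a_le_N nonneg by (metis order_antisym)
    then show ?thesis using True unfolding N_def by simp
  next
    case False
    then have "0 < N" by (simp add: N_def order_less_le)
    have "(\<Sum>i\<in>A. a i powr q) / N powr q = (\<Sum>i\<in>A. (a i / N) powr q)"
      by (simp add: powr_divide sum_divide_distrib nonneg \<open>0 < N\<close> less_imp_le)
    also have "\<dots> \<le> (\<Sum>i\<in>A. (a i / N) powr p)"
      using \<open>p \<le> q\<close> nonneg a_le_N \<open>0 < N\<close>
      by (intro sum_mono powr_mono') (auto simp: divide_le_eq)
    also have "\<dots> = (\<Sum>i\<in>A. a i powr p) / N powr p"
      using \<open>0 < N\<close> by (simp add: powr_divide nonneg less_imp_le sum_divide_distrib)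
    also have "\<dots> = 1"
      using \<open>0 < N\<close> by (simp flip: N_powr)
    finally have "(\<Sum>i\<in>A. a i powr q) \<le> N powr q" using \<open>0 < N\<close> by (simp add: divide_le_eq)
    then have "(\<Sum>i\<in>A. a i powr q) powr (1/q) \<le> (N powr q) powr (1/q)"
      using \<open>0 < q\<close> by (intro powr_mono2) (auto intro: sum_nonneg)
    also have "\<dots> = N" using \<open>0 < q\<close> \<open>0 < N\<close> by (simp add: powr_powr)
    finally show ?thesis unfolding N_def .
  qed
qed

lemma L2_set_le_powr_root_sum:
  fixes f :: "'i \<Rightarrow> 'b::real_normed_vector"
  assumes "finite A" and "0 < p" and "p \<le> 2"
  shows "L2_set (\<lambda>i. norm (f i)) A \<le> (\<Sum>i\<in>A. norm (f i) powr p) powr (1/p)"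
  using sum_powr_root_antimono[of A "\<lambda>i. norm (f i)" p 2] assms
  by (simp add: L2_set_def powr_half_sqrt sum_nonneg)

lemma powr_root_sum_le_sum:
  fixes f :: "'i \<Rightarrow> 'b::real_normed_vector"
  assumes "finite A" and "1 \<le> p"
  shows "(\<Sum>i\<in>A. norm (f i) powr p) powr (1/p) \<le> (\<Sum>i\<in>A. norm (f i))"
  using sum_powr_root_antimono[of A "\<lambda>i. norm (f i)" 1 p] assms by (simp add: sum_nonneg)

lemma integrable_powr_root_sum:
  fixes f :: "'i \<Rightarrow> 'a \<Rightarrow> 'b::{banach, second_countable_topology}"
  assumes "finite A" and integrable: "\<And>i. i \<in> A \<Longrightarrow> integrable M (f i)" and "1 \<le> p"
  shows "integrable M (\<lambda>\<omega>. (\<Sum>i\<in>A. norm (f i \<omega>) powr p) powr (1/p))"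
proof (rule Bochner_Integration.integrable_bound)
  show "integrable M (\<lambda>\<omega>. \<Sum>i\<in>A. norm (f i \<omega>))"
    using integrable by auto
  have [measurable]: "\<And>i. i \<in> A \<Longrightarrow> f i \<in> borel_measurable M"
    using integrable by auto
  show "(\<lambda>\<omega>. (\<Sum>i\<in>A. norm (f i \<omega>) powr p) powr (1/p)) \<in> borel_measurable M"
    by measurable
  show "AE \<omega> in M. norm ((\<Sum>i\<in>A. norm (f i \<omega>) powr p) powr (1/p)) \<le> norm (\<Sum>i\<in>A. norm (f i \<omega>))"
    using powr_root_sum_le_sum[OF assms(1,3)] by (intro AE_I2) (simp add: sum_nonneg)
qed

lemma two_sqrt_pi_ge: "69/20 \<le> 2 * sqrt pi"
proof -
  have "(69/40)\<^sup>2 \<le> pi"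
    using pi_gt3 by (simp add: power2_eq_square)
  then show ?thesis
    using real_le_rsqrt by fastforce
qed

lemma frob_norm_eq_norm: "frob_norm A = norm A"
  unfolding frob_norm_def norm_vec_def L2_set_def
  by (simp add: sum_nonneg)

lemma integrable_if_integrable_norm_powr:
  fixes f :: "'a \<Rightarrow> 'b::{banach, second_countable_topology}"
  assumes "finite_measure M" and "f \<in> borel_measurable M" and "1 \<le> p"
    and "integrable M (\<lambda>\<omega>. norm (f \<omega>) powr p)"
  shows "integrable M f"
proof -
  interpret finite_measure M by fact
  have bound: "norm (f \<omega>) \<le> 1 + norm (f \<omega>) powr p" for \<omega>
  proof (cases "norm (f \<omega>) \<le> 1")
    case True
    then show ?thesis using powr_ge_zero[of "norm (f \<omega>)" p] by linarith
  next
    case False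
    then have "norm (f \<omega>) powr 1 \<le> norm (f \<omega>) powr p" using \<open>1 \<le> p\<close> by (intro powr_mono) auto
    then show ?thesis using False by simp
  qed
  have "integrable M (\<lambda>\<omega>. norm (f \<omega>))"
  proof (rule Bochner_Integration.integrable_bound)
    show "integrable M (\<lambda>\<omega>. 1 + norm (f \<omega>) powr p)"
      using assms(4) by (intro Bochner_Integration.integrable_add) auto
    show "(\<lambda>\<omega>. norm (f \<omega>)) \<in> borel_measurable M"
      using assms(2) by measurable
    show "AE \<omega> in M. norm (norm (f \<omega>)) \<le> norm (1 + norm (f \<omega>) powr p)"
      using bound by (intro AE_I2) (simp add: abs_of_nonneg)
  qed
  then show ?thesis
    using assms(2) by (simp add: integrable_norm_iff)
qed

theorem mainTheorem8:
  fixes M :: "'a measure" and W :: "nat \<Rightarrow> 'a \<Rightarrow> real ^ 'n ^ 'm"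
    and p :: real and T :: nat
  assumes "prob_space M"
    and "1 < p" and "p \<le> 2" and "1 \<le> T"
    and meas: "\<And>t. t \<in> {1..T} \<Longrightarrow> W t \<in> borel_measurable M"
    and mom: "\<And>t. t \<in> {1..T} \<Longrightarrow> integrable M (\<lambda>\<omega>. frob_norm (W t \<omega>) powr p)"
    and mds: "\<And>t i j. t \<in> {1..T} \<Longrightarrow>
       AE \<omega> in M. real_cond_exp M (nat_filtration M W (t - 1)) (\<lambda>x. W t x $ i $ j) \<omega> = 0"
  shows "(\<integral>\<omega>. frob_norm (\<Sum>t=1..T. W t \<omega>) \<partial>M)
         \<le> 2 * sqrt pi * (\<integral>\<omega>. (\<Sum>t=1..T. frob_norm (W t \<omega>) powr p) powr (1 / p) \<partial>M)"
proof -
  interpret prob_space M by fact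
  have integrable: "integrable M (W t)" if "t \<in> {1..T}" for t
    using mom[OF that] \<open>1 < p\<close>
    by (intro integrable_if_integrable_norm_powr[OF finite_measure_axioms meas[OF that], of p])
      (simp_all add: frob_norm_eq_norm)
  have "(\<integral>\<omega>. norm (\<Sum>t=1..T. W t \<omega>) \<partial>M)
          \<le> 2 * sqrt pi * (\<integral>\<omega>. L2_set (\<lambda>t. norm (W t \<omega>)) {1..T} \<partial>M)"
    by (rule integral_norm_sum_le_square_function[OF \<open>prob_space M\<close> two_sqrt_pi_ge integrable mds])
  also have "\<dots> \<le> 2 * sqrt pi * (\<integral>\<omega>. (\<Sum>t=1..T. norm (W t \<omega>) powr p) powr (1/p) \<partial>M)"
  proof (intro mult_left_mono integral_mono_AE')
    show "integrable M (\<lambda>\<omega>. (\<Sum>t=1..T. norm (W t \<omega>) powr p) powr (1/p))"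
      using integrable \<open>1 < p\<close> by (intro integrable_powr_root_sum) auto
    show "AE \<omega> in M. L2_set (\<lambda>t. norm (W t \<omega>)) {1..T} \<le> (\<Sum>t=1..T. norm (W t \<omega>) powr p) powr (1/p)"
      using \<open>1 < p\<close> \<open>p \<le> 2\<close> by (intro AE_I2 L2_set_le_powr_root_sum) auto
  qed simp_all
  finally show ?thesis
    unfolding frob_norm_eq_norm .
qed

end
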